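(* Let $H=(V,E,C,\ell)$ be an edge-colored graph with $k$ colors, $x$ a feasible solution of the \textsc{MinECC} LP relaxation, $e=\{u,v\}\in E$ with color $c$ and $x_e=\max\{x_u^c,x_v^c\}$, and $z_0,z_1,\dots$ the color thresholds of $e$. Let $Y$ be the output of GenColorRound applied to $x$ with $I=(\frac12,\frac78)$. Suppose $x_e\in(\frac18,\frac12)$ and there are integers $1\le p\le q$ with $z_{p-1}\le\frac12\le z_p\le z_q\le\frac78\le z_{q+1}$. Then $p=1$, $q\le 6$, and $\Pr[e\in\mathcal M_Y]\le\frac83A_q\,x_e$, where $A_q$ is the optimal value of the linear program in real variables $\omega_1,\dots,\omega_6,\chi$: maximize $\frac{q}{q+1}\cdot\frac78\chi-\sum_{j=1}^q\frac{1}{j(j+1)}\omega_j$ subject to $\omega_i\le\omega_{i+1}$ for $i=1,\dots,5$; $\chi-\omega_1\le1$; $2\chi-\omega_2-\omega_3\le1$; $3\chi-3\omega_5\le1$; $\chi\ge 2$; $\omega_q\le\frac78\chi$.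
   Context: An edge-colored graph is $H=(V,E,C,\ell)$ with colors $C=[k]$, $\ell\colon E\to C$, where every edge is a set of exactly two nodes. A node coloring $Y\colon V\to C$ makes a mistake at $e$ ($e\in\mathcal M_Y$) if some $w\in e$ has $Y[w]\ne\ell(e)$. The \textsc{MinECC} LP relaxation constraints: $\sum_{i=1}^k x_w^i=k-1$ for all $w\in V$; $x_e\ge x_w^{\ell(e)}$ for $w\in e$; $0\le x_w^i\le1$; $0\le x_e\le 1$. Color thresholds of $e$ with color $c$: for $j\in C\setminus\{c\}$ let $m_j=\min_{w\in e}x_w^j$, sorted as $m_{(1)}\le\dots\le m_{(k-1)}$; $z_0=0$, $z_i=m_{(i)}$ for $1\le i\le k-1$, and by convention $z_i=1$ for $i\ge k$. GenColorRound with interval $I$, applied to $x$: draw $\rho$ uniformly from $I$ and, independently, a uniformly random permutation $\pi$ of $[k]$; let $S_i=\{w: x_w^i<\rho\}$; for $w\in\bigcup_iS_i$ set $Y[w]=\pi(j)$ with $j$ the largest index such that $w\in S_{\pi(j)}$; other nodes get an arbitrary color. *)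

theory Defs
  imports "HOL-Analysis.Analysis" "HOL-Combinatorics.Permutations"
begin

definition edge_colored_graph ::
  "'v set \<Rightarrow> 'v set set \<Rightarrow> nat \<Rightarrow> ('v set \<Rightarrow> nat) \<Rightarrow> bool" where
  "edge_colored_graph V E k ell \<longleftrightarrow>
     finite V \<and> (\<forall>e\<in>E. e \<subseteq> V \<and> card e = 2 \<and> ell e \<in> {1..k})"

text \<open>Feasibility for the MinECC LP relaxation; x w i is x_w^i, xE e is x_e.\<close>

definition MinECC_LP_feasible ::
  "'v set \<Rightarrow> 'v set set \<Rightarrow> nat \<Rightarrow> ('v set \<Rightarrow> nat) \<Rightarrow>
   ('v \<Rightarrow> nat \<Rightarrow> real) \<Rightarrow> ('v set \<Rightarrow> real) \<Rightarrow> bool" where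
  "MinECC_LP_feasible V E k ell x xE \<longleftrightarrow>
     (\<forall>w\<in>V. (\<Sum>i=1..k. x w i) = real k - 1) \<and>
     (\<forall>e\<in>E. \<forall>w\<in>e. xE e \<ge> x w (ell e)) \<and>
     (\<forall>w\<in>V. \<forall>i\<in>{1..k}. 0 \<le> x w i \<and> x w i \<le> 1) \<and>
     (\<forall>e\<in>E. 0 \<le> xE e \<and> xE e \<le> 1)"

definition color_thresholds ::
  "nat \<Rightarrow> ('v \<Rightarrow> nat \<Rightarrow> real) \<Rightarrow> 'v set \<Rightarrow> nat \<Rightarrow> nat \<Rightarrow> real" where
  "color_thresholds k x e c i =
     (let ms = sort (map (\<lambda>j. Min ((\<lambda>w. x w j) ` e)) (filter (\<lambda>j. j \<noteq> c) [1..<k+1]))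
      in if i = 0 then 0 else if i \<le> k - 1 then ms ! (i - 1) else 1)"

text \<open>Output of GenColorRound for a fixed threshold rho and permutation pi of {1..k};
  uncovered nodes w receive the (arbitrary) color dflt w.\<close>

definition GenColorRound ::
  "nat \<Rightarrow> ('v \<Rightarrow> nat \<Rightarrow> real) \<Rightarrow> ('v \<Rightarrow> nat) \<Rightarrow> real \<Rightarrow> (nat \<Rightarrow> nat) \<Rightarrow> 'v \<Rightarrow> nat" where
  "GenColorRound k x dflt \<rho> \<pi> w =
     (if \<exists>i\<in>{1..k}. x w i < \<rho>
      then \<pi> (GREATEST j. j \<in> {1..k} \<and> x w (\<pi> j) < \<rho>)
      else dflt w)"

text \<open>Probability of an event P rho pi when rho is uniform on the open interval (a,b) and,
  independently, pi is a uniformly random permutation of {1..k}.\<close>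

definition GCR_prob :: "nat \<Rightarrow> real \<Rightarrow> real \<Rightarrow> (real \<Rightarrow> (nat \<Rightarrow> nat) \<Rightarrow> bool) \<Rightarrow> real" where
  "GCR_prob k a b P =
     (\<Sum>\<pi>\<in>{\<pi>. \<pi> permutes {1..k}}. measure lborel {\<rho>\<in>{a<..<b}. P \<rho> \<pi>} / (b - a)) / fact k"

definition mistake :: "('v \<Rightarrow> nat) \<Rightarrow> ('v set \<Rightarrow> nat) \<Rightarrow> 'v set \<Rightarrow> bool" where
  "mistake Y ell e \<longleftrightarrow> (\<exists>w\<in>e. Y w \<noteq> ell e)"

text \<open>The auxiliary LP in variables omega_1..omega_6, chi (written kappa), and its optimal value A_q.\<close>

definition lemma4_LP_feasible :: "nat \<Rightarrow> (nat \<Rightarrow> real) \<Rightarrow> real \<Rightarrow> bool" where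
  "lemma4_LP_feasible q \<omega> \<kappa> \<longleftrightarrow>
     (\<forall>i\<in>{1..5}. \<omega> i \<le> \<omega> (i + 1)) \<and>
     \<kappa> - \<omega> 1 \<le> 1 \<and> 2 * \<kappa> - \<omega> 2 - \<omega> 3 \<le> 1 \<and> 3 * \<kappa> - 3 * \<omega> 5 \<le> 1 \<and>
     \<kappa> \<ge> 2 \<and> \<omega> q \<le> 7/8 * \<kappa>"

definition lemma4_LP_obj :: "nat \<Rightarrow> (nat \<Rightarrow> real) \<Rightarrow> real \<Rightarrow> real" where
  "lemma4_LP_obj q \<omega> \<kappa> =
     real q / (real q + 1) * (7/8) * \<kappa> - (\<Sum>j=1..q. \<omega> j / (real j * (real j + 1)))"

definition A_LP :: "nat \<Rightarrow> real" where
  "A_LP q = Sup {lemma4_LP_obj q \<omega> \<kappa> | \<omega> \<kappa>. lemma4_LP_feasible q \<omega> \<kappa>}"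

end

theory Submission
  imports Defs
begin

text \<open>For \<open>\<rho> > x_e\<close> both endpoints of \<open>e\<close> lie in \<open>S_c\<close>, so \<open>e\<close> is a mistake iff one of
  the \<open>N(\<rho>)\<close> colours \<open>j \<noteq> c\<close> with \<open>min_w x_w^j < \<rho>\<close> comes after \<open>c\<close> in \<open>\<pi>\<close>.  By
  symmetry this has probability \<open>N/(N+1) = \<Sum>_{i\<le>N} 1/(i(i+1))\<close>, and \<open>N(\<rho>)\<close> is the number
  of thresholds \<open>z_i < \<rho>\<close>; integrating over \<open>\<rho>\<close> gives
  \<open>Pr = 8/3 \<Sum>_{i\<le>q} (7/8 - z_i)/(i(i+1))\<close>.
  The LP constraints come from a charging argument: at each endpoint \<open>w\<close> the deficits
  \<open>1 - x_w^j\<close> (\<open>j \<noteq> c\<close>) add up to \<open>x_w^c \<le> x_e\<close>, and among any first \<open>n\<close> thresholds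
  at least half are attained at the same endpoint.  Hence \<open>\<omega>_i = z_i/x_e\<close>, \<open>\<chi> = 1/x_e\<close>
  is feasible and \<open>x_e\<close> times its objective is the sum above; with \<open>x_e < 1/2\<close> the same
  charging forces \<open>p = 1\<close> and \<open>q \<le> 6\<close>.\<close>

lemma sum_inverse_consecutive_products:
  "(\<Sum>i=1..n. 1 / (real i * (real i + 1))) = real n / (real n + 1)"
proof (induction n)
  case (Suc n)
  have "(\<Sum>i=1..Suc n. 1 / (real i * (real i + 1))) = real n / (real n + 1) + 1 / ((real n + 1) * (real n + 2))"
    using Suc by (simp add: add.commute)
  also have "\<dots> = (real n + 1) / (real n + 2)"
    using of_nat_0_le_iff[of n] by (simp add: divide_simps) (simp add: algebra_simps)
  finally show ?case by (simp add: add.commute)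
qed simp

lemma downward_closed_eq_atLeastAtMost_card:
  fixes D :: "nat set"
  assumes "finite D" and "0 \<notin> D" and "\<And>i j. i \<in> D \<Longrightarrow> 1 \<le> j \<Longrightarrow> j \<le> i \<Longrightarrow> j \<in> D"
  shows "D = {1..card D}"
proof (cases "D = {}")
  case False
  have "D = {1..Max D}"
  proof
    show "D \<subseteq> {1..Max D}"
      using assms(1,2) Max_ge by (fastforce simp: Suc_le_eq)
    show "{1..Max D} \<subseteq> D"
      using assms(3) Max_in[OF assms(1) False] by auto
  qed
  then obtain n where "D = {1..n}" by blast
  then show ?thesis by simp
qed simp

lemma sum_inverse_consecutive_products_below:
  fixes z :: "nat \<Rightarrow> real" and \<rho> :: real
  assumes "\<And>i j. 1 \<le> i \<Longrightarrow> i \<le> j \<Longrightarrow> j \<le> q \<Longrightarrow> z i \<le> z j"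
  defines "N \<equiv> card {i \<in> {1..q}. z i < \<rho>}"
  shows "(\<Sum>i=1..q. 1 / (real i * (real i + 1)) * indicator {z i<..} \<rho>) = real N / (real N + 1)"
proof -
  have D: "{i \<in> {1..q}. z i < \<rho>} = {1..N}"
    unfolding N_def using assms(1) by (intro downward_closed_eq_atLeastAtMost_card) force+
  have "(\<Sum>i=1..q. 1 / (real i * (real i + 1)) * indicator {z i<..} \<rho>)
      = (\<Sum>i=1..q. if z i < \<rho> then 1 / (real i * (real i + 1)) else 0)"
    by (intro sum.cong) (auto simp: indicator_def)
  also have "\<dots> = (\<Sum>i\<in>{i \<in> {1..q}. z i < \<rho>}. 1 / (real i * (real i + 1)))"
    by (rule sum.inter_filter[symmetric]) simp
  also have "\<dots> = real N / (real N + 1)"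
    unfolding D by (rule sum_inverse_consecutive_products)
  finally show ?thesis .
qed

lemma card_permutes_inv_Collect:
  "card {\<pi>. \<pi> permutes A \<and> P (inv \<pi>)} = card {\<sigma>. \<sigma> permutes A \<and> P \<sigma>}"
proof (rule bij_betw_same_card)
  show "bij_betw inv {\<pi>. \<pi> permutes A \<and> P (inv \<pi>)} {\<sigma>. \<sigma> permutes A \<and> P \<sigma>}"
    by (rule bij_betw_byWitness[where f' = inv]) (auto simp: permutes_inv permutes_inv_inv)
qed

(* Composing with the transposition of t and t' maps the permutations in which t has the
   largest image on S injectively into those in which t' has, so the card S classes have equal size. *)
lemma card_permutes_greatest_on:
  fixes A :: "'a::linorder set"
  assumes "finite A" and "S \<subseteq> A" and "c \<in> S"
  shows "card {\<sigma>. \<sigma> permutes A \<and> (\<forall>s\<in>S-{c}. \<sigma> s < \<sigma> c)} * card S = fact (card A)"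
proof -
  define P where "P t = {\<sigma>. \<sigma> permutes A \<and> (\<forall>s\<in>S-{t}. \<sigma> s < \<sigma> t)}" for t
  have finS: "finite S" using assms finite_subset by blast
  have finP: "finite (P t)" for t
    unfolding P_def by (rule finite_subset[OF _ finite_permutations[OF \<open>finite A\<close>]]) auto
  have le: "card (P t) \<le> card (P t')" if "t \<in> S" "t' \<in> S" for t t'
  proof (rule card_inj_on_le[OF _ _ finP])
    define \<tau> where "\<tau> = Transposition.transpose t t'"
    show "inj_on (\<lambda>\<sigma>. \<sigma> \<circ> \<tau>) (P t)"
      by (rule inj_onI) (metis \<tau>_def comp_id swap_id_idempotent fun.map_comp)
    have \<tau>: "\<tau> permutes A" unfolding \<tau>_def using that assms by (intro permutes_swap_id) auto
    show "(\<lambda>\<sigma>. \<sigma> \<circ> \<tau>) ` P t \<subseteq> P t'"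
    proof clarify
      fix \<sigma> assume \<sigma>: "\<sigma> \<in> P t"
      have "\<forall>s\<in>S-{t'}. \<sigma> (\<tau> s) < \<sigma> (\<tau> t')"
        using \<sigma> that unfolding P_def \<tau>_def by (auto simp: Transposition.transpose_def)
      then show "\<sigma> \<circ> \<tau> \<in> P t'"
        using \<sigma> permutes_compose[OF \<tau>] unfolding P_def by auto
    qed
  qed
  have cover: "{\<sigma>. \<sigma> permutes A} = (\<Union>t\<in>S. P t)"
  proof (intro equalityI subsetI)
    fix \<sigma> assume "\<sigma> \<in> {\<sigma>. \<sigma> permutes A}"
    then have \<sigma>: "\<sigma> permutes A" by simp
    obtain t where t: "t \<in> S" "\<sigma> t = Max (\<sigma> ` S)"
      using Max_in[of "\<sigma> ` S"] finS \<open>c \<in> S\<close> by fastforce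
    have "\<sigma> s < \<sigma> t" if "s \<in> S - {t}" for s
      using t that finS permutes_inj[OF \<sigma>] by (metis DiffE Max_ge finite_imageI image_eqI
          inj_eq order_le_neq_trans singletonI)
    then show "\<sigma> \<in> (\<Union>t\<in>S. P t)" using t \<sigma> unfolding P_def by blast
  qed (auto simp: P_def)
  have disjoint: "P t \<inter> P t' = {}" if "t \<in> S" "t' \<in> S" "t \<noteq> t'" for t t'
    using that unfolding P_def by (auto dest: order.asym)
  have "fact (card A) = card {\<sigma>. \<sigma> permutes A}"
    by (simp add: card_permutations \<open>finite A\<close>)
  also have "\<dots> = (\<Sum>t\<in>S. card (P t))"
    unfolding cover using finS finP disjoint by (intro card_UN_disjoint) auto
  also have "\<dots> = (\<Sum>t\<in>S. card (P c))"
    using le \<open>c \<in> S\<close> by (intro sum.cong) (auto intro: order.antisym)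
  finally show ?thesis unfolding P_def by simp
qed

lemma card_permutes_some_above:
  fixes A :: "'a::linorder set"
  assumes "finite A" and "T \<subseteq> A - {c}" and "c \<in> A"
  shows "real (card {\<pi>. \<pi> permutes A \<and> (\<exists>j\<in>T. inv \<pi> c < inv \<pi> j)})
    = fact (card A) * (real (card T) / (real (card T) + 1))"
proof -
  let ?Perms = "{\<pi>. \<pi> permutes A}"
  let ?Above = "{\<pi>. \<pi> permutes A \<and> (\<exists>j\<in>T. inv \<pi> c < inv \<pi> j)}"
  let ?Last = "\<lambda>\<sigma>. \<forall>s\<in>insert c T - {c}. \<sigma> s < \<sigma> c"
  have finT: "finite T" using assms finite_subset by blast
  have cT: "insert c T - {c} = T" using assms(2) by auto
  have "\<not> (\<exists>j\<in>T. inv \<pi> c < inv \<pi> j) \<longleftrightarrow> ?Last (inv \<pi>)" if \<pi>: "\<pi> permutes A" for \<pi>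
  proof -
    have "inv \<pi> j \<noteq> inv \<pi> c" if "j \<in> T" for j
    proof
      assume "inv \<pi> j = inv \<pi> c"
      then have "j = c" using permutes_inverses(1)[OF \<pi>] by metis
      then show False using that assms(2) by auto
    qed
    then show ?thesis unfolding cT by (auto simp: not_less le_less)
  qed
  then have "?Perms - ?Above = {\<pi>. \<pi> permutes A \<and> ?Last (inv \<pi>)}"
    by blast
  then have "card (?Perms - ?Above) = card {\<sigma>. \<sigma> permutes A \<and> ?Last \<sigma>}"
    using card_permutes_inv_Collect[of A ?Last] by simp
  moreover have "card (insert c T) = card T + 1"
    using assms(2) finT by (subst card_insert_disjoint) auto
  ultimately have Last: "card (?Perms - ?Above) * (card T + 1) = fact (card A)"
    using card_permutes_greatest_on[OF assms(1) _ insertI1, of c T] assms(2,3) by (simp add: subset_Diff_insert)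
  have "card ?Above \<le> card ?Perms" and "card (?Perms - ?Above) = card ?Perms - card ?Above"
    using finite_permutations[OF assms(1)] by (auto intro: card_mono card_Diff_subset)
  then have le: "card ?Above \<le> fact (card A)"
    and "card (?Perms - ?Above) = fact (card A) - card ?Above"
    unfolding card_permutations[OF refl assms(1)] .
  with Last have "real ((fact (card A) - card ?Above) * (card T + 1)) = fact (card A)"
    by simp
  then have "(fact (card A) - real (card ?Above)) * (real (card T) + 1) = fact (card A)"
    by (simp add: of_nat_diff[OF le]) (simp add: distrib_left)
  then show ?thesis by (simp add: field_simps)
qed

lemma GenColorRound_eq_iff:
  assumes \<pi>: "\<pi> permutes {1..k}" and c: "c \<in> {1..k}" and "x w c < \<rho>"
  shows "GenColorRound k x dflt \<rho> \<pi> w = c \<longleftrightarrow>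
    (\<forall>j\<in>{1..k}. j \<noteq> c \<and> x w j < \<rho> \<longrightarrow> inv \<pi> j < inv \<pi> c)"
proof -
  let ?P = "\<lambda>i. i \<in> {1..k} \<and> x w (\<pi> i) < \<rho>"
  have inv_in: "inv \<pi> j \<in> {1..k}" if "j \<in> {1..k}" for j
    using permutes_in_image[OF permutes_inv[OF \<pi>]] that by blast
  have \<pi>_inv: "\<pi> (inv \<pi> j) = j" "inv \<pi> (\<pi> j) = j" for j
    using \<pi> by (auto simp: permutes_inverses)
  have inv_eq: "inv \<pi> j = inv \<pi> c \<longleftrightarrow> j = c" for j by (metis \<pi>_inv(1))
  have Pc: "?P (inv \<pi> c)" using inv_in[OF c] \<pi>_inv assms by simp
  define G where "G = (GREATEST i. ?P i)"
  have PG: "?P G" and G_max: "\<And>i. ?P i \<Longrightarrow> i \<le> G"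
    unfolding G_def using GreatestI_nat[of ?P, OF Pc] Greatest_le_nat[of ?P] by auto
  have "GenColorRound k x dflt \<rho> \<pi> w = \<pi> G"
    unfolding GenColorRound_def G_def using c assms by auto
  also have "\<dots> = c \<longleftrightarrow> (\<forall>i. ?P i \<longrightarrow> i \<le> inv \<pi> c)"
  proof
    assume "\<pi> G = c"
    then show "\<forall>i. ?P i \<longrightarrow> i \<le> inv \<pi> c" using G_max \<pi>_inv(2)[of G] by simp
  next
    assume "\<forall>i. ?P i \<longrightarrow> i \<le> inv \<pi> c"
    then have "G = inv \<pi> c" using PG G_max[OF Pc] by (simp add: order_antisym)
    then show "\<pi> G = c" using \<pi>_inv(1) by simp
  qed
  also have "\<dots> \<longleftrightarrow> (\<forall>j\<in>{1..k}. x w j < \<rho> \<longrightarrow> inv \<pi> j \<le> inv \<pi> c)"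
  proof (intro iffI ballI impI allI)
    fix j assume "\<forall>i. ?P i \<longrightarrow> i \<le> inv \<pi> c" "j \<in> {1..k}" "x w j < \<rho>"
    then show "inv \<pi> j \<le> inv \<pi> c" using inv_in \<pi>_inv(1) by simp
  next
    fix i assume "\<forall>j\<in>{1..k}. x w j < \<rho> \<longrightarrow> inv \<pi> j \<le> inv \<pi> c" "?P i"
    then show "i \<le> inv \<pi> c" using permutes_in_image[OF \<pi>] \<pi>_inv(2)[of i] by metis
  qed
  also have "\<dots> \<longleftrightarrow> (\<forall>j\<in>{1..k}. j \<noteq> c \<and> x w j < \<rho> \<longrightarrow> inv \<pi> j < inv \<pi> c)"
    using assms(3) by (auto simp: order_le_less inv_eq)
  finally show ?thesis .
qed

lemma mistake_GenColorRound_iff: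
  assumes \<pi>: "\<pi> permutes {1..k}" and c: "ell {u, v} = c" "c \<in> {1..k}"
    and "x u c < \<rho>" "x v c < \<rho>"
  shows "mistake (GenColorRound k x dflt \<rho> \<pi>) ell {u, v} \<longleftrightarrow>
    (\<exists>j\<in>{1..k} - {c}. min (x u j) (x v j) < \<rho> \<and> inv \<pi> c < inv \<pi> j)"
proof -
  have inv_eq: "inv \<pi> j = inv \<pi> c \<longleftrightarrow> j = c" for j
    by (metis \<pi> permutes_inverses(1))
  have "mistake (GenColorRound k x dflt \<rho> \<pi>) ell {u, v} \<longleftrightarrow>
      \<not> (GenColorRound k x dflt \<rho> \<pi> u = c \<and> GenColorRound k x dflt \<rho> \<pi> v = c)"
    unfolding mistake_def c by auto
  also have "\<dots> \<longleftrightarrow> (\<exists>j\<in>{1..k} - {c}. min (x u j) (x v j) < \<rho> \<and> \<not> inv \<pi> j < inv \<pi> c)"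
    unfolding GenColorRound_eq_iff[where x = x and w = u, OF assms(1,3,4)]
      GenColorRound_eq_iff[where x = x and w = v, OF assms(1,3,5)]
    by (auto simp: min_less_iff_disj)
  also have "\<dots> \<longleftrightarrow> (\<exists>j\<in>{1..k} - {c}. min (x u j) (x v j) < \<rho> \<and> inv \<pi> c < inv \<pi> j)"
    using inv_eq by (metis DiffE insertI1 linorder_neqE_nat order.asym)
  finally show ?thesis .
qed

lemma GCR_prob_eq_step_sum:
  fixes w t :: "'i \<Rightarrow> real"
  assumes "a < b" and "finite I"
    and meas: "\<And>\<pi>. \<pi> permutes {1..k} \<Longrightarrow> {\<rho> \<in> {a<..<b}. P \<rho> \<pi>} \<in> sets lborel"
    and count: "\<And>\<rho>. \<rho> \<in> {a<..<b} \<Longrightarrow>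
      real (card {\<pi>. \<pi> permutes {1..k} \<and> P \<rho> \<pi>}) = fact k * (\<Sum>i\<in>I. w i * indicator {t i<..} \<rho>)"
    and t: "\<And>i. i \<in> I \<Longrightarrow> a \<le> t i \<and> t i \<le> b"
  shows "GCR_prob k a b P = (\<Sum>i\<in>I. w i * (b - t i)) / (b - a)"
proof -
  define Perms where "Perms = {\<pi>. \<pi> permutes {1..k::nat}}"
  define A where "A \<pi> = {\<rho> \<in> {a<..<b}. P \<rho> \<pi>}" for \<pi>
  have finPerms: "finite Perms" unfolding Perms_def by (simp add: finite_permutations)
  have A_fin: "emeasure lborel (A \<pi>) < \<infinity>" for \<pi>
  proof -
    have "emeasure lborel (A \<pi>) \<le> emeasure lborel {a<..<b}"
      by (rule emeasure_mono) (auto simp: A_def)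
    then show ?thesis using \<open>a < b\<close> by (simp add: le_less_trans)
  qed
  have pointwise: "(\<Sum>\<pi>\<in>Perms. indicator (A \<pi>) \<rho>) = fact k * (\<Sum>i\<in>I. w i * indicator {t i<..<b} \<rho>)"
    for \<rho> :: real
  proof (cases "\<rho> \<in> {a<..<b}")
    case True
    have "(\<Sum>\<pi>\<in>Perms. indicator (A \<pi>) \<rho>) = real (card {\<pi>. \<pi> permutes {1..k} \<and> P \<rho> \<pi>})"
      using True finPerms by (simp add: A_def Perms_def indicator_def sum.If_cases Int_def conj_commute)
    then show ?thesis using True count by (simp add: indicator_def)
  next
    case False
    then show ?thesis using t by (force simp: A_def indicator_def intro!: sum.neutral)
  qed
  have "has_bochner_integral lborel (\<lambda>\<rho>. \<Sum>\<pi>\<in>Perms. indicator (A \<pi>) \<rho>) (\<Sum>\<pi>\<in>Perms. measure lborel (A \<pi>))"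
    using meas A_fin by (intro has_bochner_integral_sum has_bochner_integral_real_indicator) (auto simp: A_def Perms_def)
  moreover have "has_bochner_integral lborel (\<lambda>\<rho>. \<Sum>\<pi>\<in>Perms. indicator (A \<pi>) \<rho>)
      (fact k * (\<Sum>i\<in>I. w i * measure lborel {t i<..<b}))"
    unfolding pointwise
    by (intro has_bochner_integral_mult_right has_bochner_integral_sum has_bochner_integral_real_indicator)
      (use t in auto)
  ultimately have "(\<Sum>\<pi>\<in>Perms. measure lborel (A \<pi>)) = fact k * (\<Sum>i\<in>I. w i * (b - t i))"
    using t by (auto dest: has_bochner_integral_eq intro!: sum.cong)
  moreover have "GCR_prob k a b P = (\<Sum>\<pi>\<in>Perms. measure lborel (A \<pi>) / (b - a)) / fact k"
    unfolding GCR_prob_def Perms_def A_def ..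
  ultimately show ?thesis by (simp add: sum_divide_distrib[symmetric])
qed

lemma length_filter_neq_upt:
  assumes "c \<in> {1..k}"
  shows "length (filter (\<lambda>j. j \<noteq> c) [1..<k+1]) = k - 1"
proof -
  have "set (filter (\<lambda>j. j \<noteq> c) [1..<k+1]) = {1..k} - {c}" by auto
  then show ?thesis using distinct_card[of "filter (\<lambda>j. j \<noteq> c) [1..<k+1]"] assms by simp
qed

lemma color_thresholds_mono:
  assumes "c \<in> {1..k}" and "1 \<le> i" and "i \<le> j" and "j \<le> k - 1"
  shows "color_thresholds k x e c i \<le> color_thresholds k x e c j"
proof -
  define ms where "ms = sort (map (\<lambda>j. Min ((\<lambda>w. x w j) ` e)) (filter (\<lambda>j. j \<noteq> c) [1..<k+1]))"
  have "sorted ms" and "length ms = k - 1"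
    unfolding ms_def using length_filter_neq_upt[OF assms(1)] by simp_all
  moreover have "color_thresholds k x e c l = ms ! (l - 1)" if "1 \<le> l" "l \<le> k - 1" for l
    using that unfolding color_thresholds_def ms_def Let_def by simp
  ultimately show ?thesis using assms(2-) sorted_nth_mono[of ms "i - 1" "j - 1"] by simp
qed

lemma color_thresholds_enumeration:
  assumes "c \<in> {1..k}"
  obtains jj where "bij_betw jj {1..k-1} ({1..k} - {c})"
    and "\<And>i. i \<in> {1..k-1} \<Longrightarrow> color_thresholds k x e c i = Min ((\<lambda>w. x w (jj i)) ` e)"
proof -
  define m where "m j = Min ((\<lambda>w. x w j) ` e)" for j
  define L where "L = filter (\<lambda>j. j \<noteq> c) [1..<k+1]"
  define ms where "ms = sort (map m L)"
  have L: "distinct L" "set L = {1..k} - {c}" unfolding L_def by auto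
  have lenL: "length L = k - 1" unfolding L_def by (rule length_filter_neq_upt[OF assms])
  have z: "color_thresholds k x e c i = ms ! (i - 1)" if "i \<in> {1..k-1}" for i
    using that unfolding color_thresholds_def ms_def L_def m_def by simp
  have "mset ms = mset (map m L)" unfolding ms_def by (rule mset_sort)
  then obtain \<sigma> where \<sigma>: "\<sigma> permutes {..<length (map m L)}" "permute_list \<sigma> (map m L) = ms"
    by (rule mset_eq_permutation)
  define jj where "jj = (!) L \<circ> \<sigma> \<circ> (\<lambda>i. i - 1)"
  have "bij_betw (\<lambda>i. i - 1) {1..n} {..<n}" for n :: nat
    by (rule bij_betw_byWitness[where f' = Suc]) auto
  then have "bij_betw (\<lambda>i. i - 1) {1..k-1} {..<k-1}" .
  moreover have "bij_betw \<sigma> {..<k-1} {..<k-1}"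
    using permutes_imp_bij[OF \<sigma>(1)] lenL by simp
  moreover have "bij_betw ((!) L) {..<k-1} ({1..k} - {c})"
    using L lenL by (intro bij_betw_nth) auto
  ultimately have "bij_betw jj {1..k-1} ({1..k} - {c})"
    unfolding jj_def by (intro bij_betw_trans)
  moreover have "color_thresholds k x e c i = m (jj i)" if "i \<in> {1..k-1}" for i
  proof -
    have "i - 1 < k - 1" using that by auto
    then have "i - 1 < length (map m L)" and "\<sigma> (i - 1) < length L"
      using lenL permutes_in_image[OF \<sigma>(1)] by simp_all
    then show ?thesis
      using that by (simp add: z jj_def flip: \<sigma>(2) add: permute_list_nth[OF \<sigma>(1)])
  qed
  ultimately show ?thesis using that unfolding m_def by blast
qed

lemma color_thresholds_eq_1: "k - 1 < i \<Longrightarrow> color_thresholds k x e c i = 1"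
  by (simp add: color_thresholds_def)

(* A_LP q is a Sup over the reals, so it bounds the feasible objectives only if they are bounded
   above; this needs q \<le> 6, since \<omega> 7 is unconstrained from below. *)
lemma lemma4_LP_obj_bounded:
  assumes "q \<le> 6" and "lemma4_LP_feasible q \<omega> \<kappa>"
  shows "lemma4_LP_obj q \<omega> \<kappa> \<le> 1"
proof -
  have \<omega>: "\<omega> 1 \<le> \<omega> 2" "\<omega> 2 \<le> \<omega> 3" "\<omega> 3 \<le> \<omega> 4" "\<omega> 4 \<le> \<omega> 5" "\<omega> 5 \<le> \<omega> 6"
    and \<kappa>: "\<kappa> - \<omega> 1 \<le> 1" "2 \<le> \<kappa>"
    using assms(2) unfolding lemma4_LP_feasible_def by (auto simp: numeral_eq_Suc)
  have lower: "\<kappa> - 1 \<le> \<omega> j" if "j \<in> {1..q}" for j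
  proof -
    have "j = 1 \<or> j = 2 \<or> j = 3 \<or> j = 4 \<or> j = 5 \<or> j = 6" using that assms(1) by auto
    then show ?thesis using \<omega> \<kappa> by auto
  qed
  define r where "r = real q / (real q + 1)"
  have "(\<kappa> - 1) * r \<le> (\<Sum>j=1..q. \<omega> j / (real j * (real j + 1)))"
    unfolding r_def sum_inverse_consecutive_products[symmetric] sum_distrib_left
    by (intro sum_mono) (simp add: divide_right_mono lower)
  then have "lemma4_LP_obj q \<omega> \<kappa> \<le> r * (1 - \<kappa> / 8)"
    unfolding lemma4_LP_obj_def r_def[symmetric] by (simp add: algebra_simps)
  also have "\<dots> \<le> 1"
  proof -
    have "0 \<le> r" "r \<le> 1" unfolding r_def by auto
    then show ?thesis using \<kappa>(2) mult_left_mono[of "1 - \<kappa> / 8" 1 r] by linarith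
  qed
  finally show ?thesis .
qed

lemma lemma4_LP_obj_le_A_LP:
  assumes "q \<le> 6" and "lemma4_LP_feasible q \<omega> \<kappa>"
  shows "lemma4_LP_obj q \<omega> \<kappa> \<le> A_LP q"
  unfolding A_LP_def
  by (rule cSup_upper) (use assms lemma4_LP_obj_bounded in \<open>auto intro!: bdd_aboveI[of _ 1]\<close>)

lemma lemma4_LP_obj_scaled:
  assumes "xe \<noteq> 0"
  shows "xe * lemma4_LP_obj q (\<lambda>i. z i / xe) (1 / xe)
    = (\<Sum>i=1..q. 1 / (real i * (real i + 1)) * (7/8 - z i))"
proof -
  have "(\<Sum>i=1..q. 1 / (real i * (real i + 1)) * (7/8 - z i))
      = 7/8 * (\<Sum>i=1..q. 1 / (real i * (real i + 1))) - (\<Sum>i=1..q. z i / (real i * (real i + 1)))"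
    by (simp add: sum_subtractf sum_distrib_left algebra_simps)
  also have "\<dots> = xe * lemma4_LP_obj q (\<lambda>i. z i / xe) (1 / xe)"
    using assms unfolding lemma4_LP_obj_def sum_inverse_consecutive_products
    by (simp add: right_diff_distrib sum_distrib_left mult.commute)
  finally show ?thesis ..
qed

text \<open>Everything the bounds use about the colour thresholds \<open>z\<close> of an edge with LP value
  \<open>xe\<close>; the last assumption is the charging property.\<close>

locale charged_thresholds =
  fixes z :: "nat \<Rightarrow> real" and xe :: real
  assumes mono: "1 \<le> i \<Longrightarrow> i \<le> j \<Longrightarrow> z i \<le> z j"
    and le_one: "1 \<le> i \<Longrightarrow> z i \<le> 1"
    and prefix_charged: "\<exists>I \<subseteq> {1..n}. n \<le> 2 * card I \<and> (\<Sum>i\<in>I. 1 - z i) \<le> xe"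
begin

lemma card_mult_deficit_le_sum:
  assumes "I \<subseteq> {1..n}"
  shows "real (card I) * (1 - z n) \<le> (\<Sum>i\<in>I. 1 - z i)"
proof -
  have "(\<Sum>i\<in>I. 1 - z n) \<le> (\<Sum>i\<in>I. 1 - z i)"
    by (rule sum_mono) (use assms mono in auto)
  then show ?thesis by simp
qed

lemma deficit_le: "1 \<le> i \<Longrightarrow> 1 - z i \<le> xe"
proof -
  assume "1 \<le> i"
  obtain I where "I \<subseteq> {1..1}" "1 \<le> 2 * card I" "(\<Sum>i\<in>I. 1 - z i) \<le> xe"
    using prefix_charged by blast
  then have "1 - z 1 \<le> xe" by (auto simp: subset_singleton_iff)
  then show ?thesis using mono[OF order_refl \<open>1 \<le> i\<close>] by simp
qed

lemma eq_1_if_le_half: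
  assumes "xe < 1/2" and "1 \<le> p" and "z (p - 1) \<le> 1/2"
  shows "p = 1"
proof (rule ccontr)
  assume "p \<noteq> 1"
  then have "1 - z (p - 1) \<le> xe" using assms(2) by (intro deficit_le) simp
  then show False using assms(1,3) by simp
qed

lemma le_6_if_le_seven_eighths:
  assumes "xe < 1/2" and "z q \<le> 7/8"
  shows "q \<le> 6"
proof (rule ccontr)
  assume "\<not> q \<le> 6"
  obtain I where I: "I \<subseteq> {1..7}" "7 \<le> 2 * card I" "(\<Sum>i\<in>I. 1 - z i) \<le> xe"
    using prefix_charged by blast
  have "1/8 \<le> 1 - z 7" using mono[of 7 q] \<open>\<not> q \<le> 6\<close> assms(2) by simp
  then have "real (card I) * (1/8) \<le> (\<Sum>i\<in>I. 1 - z i)"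
    using card_mult_deficit_le_sum[OF I(1)] by (meson mult_left_mono of_nat_0_le_iff order_trans)
  moreover have "4 \<le> card I" using I(2) by linarith
  ultimately show False using I(3) assms(1) by simp
qed

lemma two_deficits_le: "(1 - z 2) + (1 - z 3) \<le> xe"
proof -
  obtain I where I: "I \<subseteq> {1..3}" "3 \<le> 2 * card I" "(\<Sum>i\<in>I. 1 - z i) \<le> xe"
    using prefix_charged by blast
  define C where "C = {1..3} - I"
  have "card C \<le> 1"
    using card_Diff_subset[OF finite_subset[OF I(1)] I(1)] I(2) unfolding C_def by simp
  have "(\<Sum>i\<in>C. 1 - z i) \<le> real (card C) * (1 - z 1)"
    by (rule sum_bounded_above) (use mono in \<open>auto simp: C_def\<close>)
  also have "\<dots> \<le> 1 - z 1"
    using \<open>card C \<le> 1\<close> le_one[of 1] by (intro mult_left_le_one_le) auto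
  finally have "(\<Sum>i\<in>C. 1 - z i) \<le> 1 - z 1" .
  moreover have "(\<Sum>i\<in>{1..3}. 1 - z i) = (\<Sum>i\<in>C. 1 - z i) + (\<Sum>i\<in>I. 1 - z i)"
    unfolding C_def by (rule sum.subset_diff[OF I(1)]) simp
  moreover have "(\<Sum>i\<in>{1..3}. 1 - z i) = (1 - z 1) + (1 - z 2) + (1 - z 3)"
    by (simp add: numeral_eq_Suc)
  ultimately show ?thesis using I(3) by linarith
qed

lemma three_deficits_le: "3 * (1 - z 5) \<le> xe"
proof -
  obtain I where I: "I \<subseteq> {1..5}" "5 \<le> 2 * card I" "(\<Sum>i\<in>I. 1 - z i) \<le> xe"
    using prefix_charged by blast
  have "3 * (1 - z 5) \<le> real (card I) * (1 - z 5)"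
    using I(2) le_one[of 5] by (intro mult_right_mono) auto
  then show ?thesis using card_mult_deficit_le_sum[OF I(1)] I(3) by linarith
qed

lemma lemma4_LP_feasible_scaled:
  assumes "0 < xe" and "xe < 1/2" and "z q \<le> 7/8"
  shows "lemma4_LP_feasible q (\<lambda>i. z i / xe) (1 / xe)"
proof -
  have scaled: "a / xe \<le> 1" if "a \<le> xe" for a using that assms(1) by simp
  have "z i / xe \<le> z (i + 1) / xe" if "i \<in> {1..5}" for i
    using that mono[of i "i + 1"] assms(1) by (simp add: divide_right_mono)
  moreover have "1 / xe - z 1 / xe \<le> 1"
    using scaled[OF deficit_le[of 1]] by (simp add: diff_divide_distrib)
  moreover have "2 * (1 / xe) - z 2 / xe - z 3 / xe \<le> 1"
    using scaled[OF two_deficits_le] by (simp add: diff_divide_distrib add_divide_distrib)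
  moreover have "3 * (1 / xe) - 3 * (z 5 / xe) \<le> 1"
    using scaled[OF three_deficits_le] by (simp add: diff_divide_distrib right_diff_distrib)
  moreover have "2 \<le> 1 / xe" using assms(1,2) by (simp add: le_divide_eq)
  moreover have "z q / xe \<le> 7/8 * (1 / xe)"
    using divide_right_mono[OF assms(3), of xe] assms(1) by simp
  ultimately show ?thesis unfolding lemma4_LP_feasible_def by blast
qed

end

lemma MinECC_LP_deficit_sum:
  assumes "MinECC_LP_feasible V E k ell x xE" and "w \<in> V" and "c \<in> {1..k}"
  shows "(\<Sum>j\<in>{1..k} - {c}. 1 - x w j) = x w c"
proof -
  have "(\<Sum>j\<in>{1..k}. x w j) = real k - 1"
    using assms(1,2) unfolding MinECC_LP_feasible_def by blast
  moreover have "(\<Sum>j\<in>{1..k}. x w j) = x w c + (\<Sum>j\<in>{1..k} - {c}. x w j)"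
    using assms(3) by (simp add: sum.remove)
  moreover have "real (card ({1..k} - {c})) = real k - 1"
    using assms(3) by (simp add: of_nat_diff)
  ultimately show ?thesis by (simp add: sum_subtractf)
qed

locale MinECC_edge =
  fixes V :: "'v set" and E :: "'v set set" and k :: nat and ell :: "'v set \<Rightarrow> nat"
    and x :: "'v \<Rightarrow> nat \<Rightarrow> real" and xE :: "'v set \<Rightarrow> real" and u v :: 'v
  assumes graph: "edge_colored_graph V E k ell"
    and feasible: "MinECC_LP_feasible V E k ell x xE"
    and edge: "{u, v} \<in> E"
begin

abbreviation "c \<equiv> ell {u, v}"
abbreviation "z \<equiv> color_thresholds k x {u, v} c"
abbreviation "xe \<equiv> xE {u, v}"

lemma color_in: "c \<in> {1..k}" and endpoints_in: "u \<in> V" "v \<in> V"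
  using graph edge unfolding edge_colored_graph_def by auto

lemma color_le_xe: "w \<in> {u, v} \<Longrightarrow> x w c \<le> xe"
  using feasible edge unfolding MinECC_LP_feasible_def by blast

lemma x_bounds: "w \<in> {u, v} \<Longrightarrow> j \<in> {1..k} \<Longrightarrow> 0 \<le> x w j \<and> x w j \<le> 1"
  using feasible endpoints_in unfolding MinECC_LP_feasible_def by blast

lemma thresholds_enumeration:
  obtains jj where "bij_betw jj {1..k-1} ({1..k} - {c})"
    and "\<And>i. i \<in> {1..k-1} \<Longrightarrow> z i = min (x u (jj i)) (x v (jj i))"
proof -
  have "Min ((\<lambda>w. x w j) ` {u, v}) = min (x u j) (x v j)" for j by simp
  then show ?thesis using color_thresholds_enumeration[OF color_in, of x "{u, v}"] that by auto
qed

lemma sum_deficits_le_if_attained: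
  assumes jj: "bij_betw jj {1..k-1} ({1..k} - {c})"
    and w: "w \<in> {u, v}" and I: "I \<subseteq> {1..n}"
    and attained: "\<And>i. i \<in> I \<Longrightarrow> i \<le> k - 1 \<Longrightarrow> z i = x w (jj i)"
  shows "(\<Sum>i\<in>I. 1 - z i) \<le> xe"
proof -
  let ?I = "I \<inter> {1..k-1}"
  have finI: "finite I" using I finite_subset by blast
  have "1 - z i = 0" if "i \<in> I - ?I" for i
    using that I by (auto simp: color_thresholds_eq_1)
  then have "(\<Sum>i\<in>I. 1 - z i) = (\<Sum>i\<in>?I. 1 - z i)"
    using finI by (intro sum.mono_neutral_right) auto
  also have "\<dots> = (\<Sum>i\<in>?I. 1 - x w (jj i))"
    using attained by (intro sum.cong) auto
  also have "\<dots> = (\<Sum>j\<in>jj ` ?I. 1 - x w j)"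
    using bij_betw_imp_inj_on[OF jj] by (simp add: sum.reindex inj_on_subset)
  also have "\<dots> \<le> (\<Sum>j\<in>{1..k} - {c}. 1 - x w j)"
    using bij_betw_imp_surj_on[OF jj] x_bounds[OF w] by (intro sum_mono2) auto
  also have "\<dots> = x w c"
    using MinECC_LP_deficit_sum[OF feasible _ color_in] w endpoints_in by auto
  also have "\<dots> \<le> xe" using color_le_xe[OF w] .
  finally show ?thesis .
qed

lemma charged: "charged_thresholds z xe"
proof -
  obtain jj where jj: "bij_betw jj {1..k-1} ({1..k} - {c})"
    and z_jj: "\<And>i. i \<in> {1..k-1} \<Longrightarrow> z i = min (x u (jj i)) (x v (jj i))"
    using thresholds_enumeration by blast
  have le_one: "z i \<le> 1" if "1 \<le> i" for i
  proof (cases "i \<le> k - 1")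
    case True
    then have "jj i \<in> {1..k}" using bij_betw_apply[OF jj] that by auto
    then show ?thesis using z_jj[of i] x_bounds[of u "jj i"] that True by auto
  qed (simp add: color_thresholds_eq_1)
  show ?thesis
  proof
    fix i j :: nat assume "1 \<le> i" "i \<le> j"
    then show "z i \<le> z j"
      using color_thresholds_mono[OF color_in] le_one color_thresholds_eq_1[of k j x "{u, v}" c]
      by (cases "j \<le> k - 1") auto
  next
    fix i :: nat assume "1 \<le> i"
    then show "z i \<le> 1" by (rule le_one)
  next
    fix n :: nat
    define I where "I w = {i \<in> {1..n}. i \<le> k - 1 \<longrightarrow> z i = x w (jj i)}" for w
    have "{1..n} = I u \<union> I v"
      unfolding I_def using z_jj by (auto simp: min_def split: if_splits)
    then have "n = card (I u \<union> I v)" using card_atLeastAtMost[of 1 n] by simp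
    then have "n \<le> 2 * card (I u) \<or> n \<le> 2 * card (I v)"
      using card_Un_le[of "I u" "I v"] by linarith
    then obtain w where "w \<in> {u, v}" "n \<le> 2 * card (I w)"
      by (elim disjE) auto
    moreover have "I w \<subseteq> {1..n}" unfolding I_def by auto
    moreover have "(\<Sum>i\<in>I w. 1 - z i) \<le> xe"
      by (rule sum_deficits_le_if_attained[OF jj \<open>w \<in> {u, v}\<close>]) (auto simp: I_def)
    ultimately show "\<exists>I \<subseteq> {1..n}. n \<le> 2 * card I \<and> (\<Sum>i\<in>I. 1 - z i) \<le> xe"
      by blast
  qed
qed

lemma mistake_iff:
  assumes "\<pi> permutes {1..k}" and "xe < \<rho>"
  shows "mistake (GenColorRound k x dflt \<rho> \<pi>) ell {u, v} \<longleftrightarrow>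
    (\<exists>j\<in>{1..k} - {c}. min (x u j) (x v j) < \<rho> \<and> inv \<pi> c < inv \<pi> j)"
proof -
  have "x u c < \<rho>" "x v c < \<rho>" using assms(2) color_le_xe[of u] color_le_xe[of v] by auto
  then show ?thesis
    by (rule mistake_GenColorRound_iff[where ell = ell and u = u and v = v, OF assms(1) refl color_in])
qed

lemma mistakes_borel:
  assumes "\<pi> permutes {1..k}" and "xe \<le> a"
  shows "{\<rho> \<in> {a<..<b}. mistake (GenColorRound k x dflt \<rho> \<pi>) ell {u, v}} \<in> sets lborel"
proof -
  let ?J = "{j \<in> {1..k} - {c}. inv \<pi> c < inv \<pi> j}"
  have "mistake (GenColorRound k x dflt \<rho> \<pi>) ell {u, v} \<longleftrightarrow> \<rho> \<in> (\<Union>j\<in>?J. {min (x u j) (x v j)<..})"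
    if "\<rho> \<in> {a<..<b}" for \<rho>
    using mistake_iff[OF assms(1), of \<rho>] that assms(2) by auto
  then have "{\<rho> \<in> {a<..<b}. mistake (GenColorRound k x dflt \<rho> \<pi>) ell {u, v}}
      = {a<..<b} \<inter> (\<Union>j\<in>?J. {min (x u j) (x v j)<..})"
    by blast
  then show ?thesis by (simp add: borel_open open_Int open_UN)
qed

lemma card_mistakes_eq:
  assumes "xe < \<rho>"
  defines "N \<equiv> card {i \<in> {1..k-1}. z i < \<rho>}"
  shows "real (card {\<pi>. \<pi> permutes {1..k} \<and> mistake (GenColorRound k x dflt \<rho> \<pi>) ell {u, v}})
    = fact k * (real N / (real N + 1))"
proof -
  let ?T = "{j \<in> {1..k} - {c}. min (x u j) (x v j) < \<rho>}"
  obtain jj where jj: "bij_betw jj {1..k-1} ({1..k} - {c})"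
    and z_jj: "\<And>i. i \<in> {1..k-1} \<Longrightarrow> z i = min (x u (jj i)) (x v (jj i))"
    using thresholds_enumeration by blast
  have T: "?T = jj ` {i \<in> {1..k-1}. z i < \<rho>}"
  proof (intro equalityI subsetI)
    fix j assume j: "j \<in> ?T"
    then have "j \<in> jj ` {1..k-1}" using bij_betw_imp_surj_on[OF jj] by simp
    then obtain i where i: "i \<in> {1..k-1}" "j = jj i" by (rule imageE)
    then have "i \<in> {i \<in> {1..k-1}. z i < \<rho>}" using j z_jj[OF i(1)] by simp
    then show "j \<in> jj ` {i \<in> {1..k-1}. z i < \<rho>}" using i(2) by (rule rev_image_eqI)
  next
    fix j assume "j \<in> jj ` {i \<in> {1..k-1}. z i < \<rho>}"
    then obtain i where i: "i \<in> {1..k-1}" "z i < \<rho>" "j = jj i" by blast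
    then show "j \<in> ?T" using z_jj[OF i(1)] bij_betw_apply[OF jj i(1)] by simp
  qed
  have "inj_on jj {i \<in> {1..k-1}. z i < \<rho>}"
    by (rule inj_on_subset[OF bij_betw_imp_inj_on[OF jj]]) auto
  then have card_T: "card ?T = N" unfolding N_def T by (rule card_image)
  have "mistake (GenColorRound k x dflt \<rho> \<pi>) ell {u, v} \<longleftrightarrow> (\<exists>j\<in>?T. inv \<pi> c < inv \<pi> j)"
    if "\<pi> permutes {1..k}" for \<pi>
    using mistake_iff[OF that assms(1)] by auto
  then have "{\<pi>. \<pi> permutes {1..k} \<and> mistake (GenColorRound k x dflt \<rho> \<pi>) ell {u, v}}
      = {\<pi>. \<pi> permutes {1..k} \<and> (\<exists>j\<in>?T. inv \<pi> c < inv \<pi> j)}"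
    by blast
  moreover have "?T \<subseteq> {1..k} - {c}" by blast
  note card_permutes_some_above[OF finite_atLeastAtMost this color_in]
  ultimately show ?thesis unfolding card_T by simp
qed

lemma card_mistakes_eq_step_sum:
  assumes "xe < \<rho>" and "\<rho> < z (q + 1)"
  shows "real (card {\<pi>. \<pi> permutes {1..k} \<and> mistake (GenColorRound k x dflt \<rho> \<pi>) ell {u, v}})
    = fact k * (\<Sum>i=1..q. 1 / (real i * (real i + 1)) * indicator {z i<..} \<rho>)"
proof -
  interpret charged_thresholds z xe by (rule charged)
  have "i \<le> q" if "1 \<le> i" "z i < \<rho>" for i
    using that assms(2) mono[of "q + 1" i] by (cases "q + 1 \<le> i") auto
  moreover have "i \<le> k - 1" if "1 \<le> i" "z i < \<rho>" for i
    using that assms(2) le_one[of "q + 1"] color_thresholds_eq_1[of k i x "{u, v}" c]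
    by (cases "i \<le> k - 1") auto
  ultimately have "{i \<in> {1..k-1}. z i < \<rho>} = {i \<in> {1..q}. z i < \<rho>}" by auto
  then show ?thesis
    using card_mistakes_eq[OF assms(1)] sum_inverse_consecutive_products_below[of q z \<rho>] mono by simp
qed

lemma GCR_prob_mistake_eq:
  assumes "xe \<le> 1/2" and "1/2 \<le> z 1" and "z q \<le> 7/8" and "7/8 \<le> z (q + 1)"
  shows "GCR_prob k (1/2) (7/8) (\<lambda>\<rho> \<pi>. mistake (GenColorRound k x dflt \<rho> \<pi>) ell {u, v})
    = 8/3 * (\<Sum>i=1..q. 1 / (real i * (real i + 1)) * (7/8 - z i))"
proof -
  interpret charged_thresholds z xe by (rule charged)
  have "GCR_prob k (1/2) (7/8) (\<lambda>\<rho> \<pi>. mistake (GenColorRound k x dflt \<rho> \<pi>) ell {u, v})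
      = (\<Sum>i=1..q. 1 / (real i * (real i + 1)) * (7/8 - z i)) / (7/8 - 1/2)"
  proof (rule GCR_prob_eq_step_sum)
    show "{\<rho> \<in> {1/2<..<7/8}. mistake (GenColorRound k x dflt \<rho> \<pi>) ell {u, v}} \<in> sets lborel"
      if "\<pi> permutes {1..k}" for \<pi>
      using that assms(1) by (rule mistakes_borel)
    show "real (card {\<pi>. \<pi> permutes {1..k} \<and> mistake (GenColorRound k x dflt \<rho> \<pi>) ell {u, v}})
      = fact k * (\<Sum>i=1..q. 1 / (real i * (real i + 1)) * indicator {z i<..} \<rho>)"
      if "\<rho> \<in> {1/2<..<7/8}" for \<rho>
      using that assms(1,4) by (intro card_mistakes_eq_step_sum) auto
    show "1/2 \<le> z i \<and> z i \<le> 7/8" if "i \<in> {1..q}" for i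
      using that assms(2,3) mono[of 1 i] mono[of i q] by auto
  qed auto
  then show ?thesis by simp
qed

end

theorem lemma4:
  fixes V :: "'v set" and E :: "'v set set" and k :: nat and ell :: "'v set \<Rightarrow> nat"
    and x :: "'v \<Rightarrow> nat \<Rightarrow> real" and xE :: "'v set \<Rightarrow> real"
    and u v :: 'v and dflt :: "'v \<Rightarrow> nat" and p q :: nat
  assumes "edge_colored_graph V E k ell"
    and "MinECC_LP_feasible V E k ell x xE"
    and "{u, v} \<in> E"
    and "xE {u, v} = max (x u (ell {u, v})) (x v (ell {u, v}))"
    and "\<forall>w. dflt w \<in> {1..k}"
    and "1/8 < xE {u, v}" and "xE {u, v} < 1/2"
    and "1 \<le> p" and "p \<le> q"
    and "color_thresholds k x {u, v} (ell {u, v}) (p - 1) \<le> 1/2"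
    and "1/2 \<le> color_thresholds k x {u, v} (ell {u, v}) p"
    and "color_thresholds k x {u, v} (ell {u, v}) p \<le> color_thresholds k x {u, v} (ell {u, v}) q"
    and "color_thresholds k x {u, v} (ell {u, v}) q \<le> 7/8"
    and "7/8 \<le> color_thresholds k x {u, v} (ell {u, v}) (q + 1)"
  shows "p = 1 \<and> q \<le> 6 \<and>
    GCR_prob k (1/2) (7/8) (\<lambda>\<rho> \<pi>. mistake (GenColorRound k x dflt \<rho> \<pi>) ell {u, v})
      \<le> 8/3 * A_LP q * xE {u, v}"
proof -
  \<comment> \<open>\<open>x_e = max\<close> and the default colours are never needed: feasibility already gives
    \<open>x_w^c \<le> x_e\<close>, and for \<open>\<rho> > x_e\<close> both endpoints are covered by \<open>S_c\<close>.\<close>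
  interpret MinECC_edge V E k ell x xE u v using assms(1-3) by unfold_locales
  interpret charged_thresholds z xe by (rule charged)
  have xe: "0 < xe" "xe < 1/2" using assms(6,7) by auto
  have p: "p = 1" using eq_1_if_le_half xe(2) assms(8,10) .
  have q: "q \<le> 6" using le_6_if_le_seven_eighths xe(2) assms(13) .
  have "GCR_prob k (1/2) (7/8) (\<lambda>\<rho> \<pi>. mistake (GenColorRound k x dflt \<rho> \<pi>) ell {u, v})
      = 8/3 * (xe * lemma4_LP_obj q (\<lambda>i. z i / xe) (1 / xe))"
    using GCR_prob_mistake_eq[of q dflt] lemma4_LP_obj_scaled[of xe q z] xe p assms(11,13,14) by simp
  also have "\<dots> \<le> 8/3 * (xe * A_LP q)"
    using lemma4_LP_obj_le_A_LP[OF q lemma4_LP_feasible_scaled[OF xe assms(13)]] xe by simp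
  finally show ?thesis using p q by (simp add: mult.commute mult.left_commute)
qed

end
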